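(* Let $G$, with terminal set $T$, be an instance of a solution graph concept $\mathcal{S}$, and let $\mathcal{S}^c(G,T)$ be the contracted solution graph for some terminal projection $p$. Let $\alpha$ and $\beta$ be two solutions of $G$ and let $S$ be a certificate for $\mathcal{S}^c(G,T)$; let $x$ be the node with $\alpha\in S_x$ and $y$ the node with $\beta\in S_y$. Then there is a path from $\alpha$ to $\beta$ in $\mathcal{S}(G)$ if and only if there is a path from $x$ to $y$ in $\mathcal{S}^c(G,T)$.
   Context: A solution graph concept $\mathcal{S}$ specifies a class of instances, for each instance $G$ a set of solutions, and a symmetric adjacency relation between solutions of the same instance; the solution graph $\mathcal{S}(G)$ has the solutions of $G$ as nodes and edges given by the adjacency relation. A terminal projection $p$ assigns a label $p(G,T,\gamma)$ to every triple consisting of an instance $G$, a set $T$ (of terminals) and a solution $\gamma$ of $G$. A label component of $\mathcal{S}(G)$ (for $T$) is a maximal set of solutions that all have the same label and induce a connected subgraph of $\mathcal{S}(G)$. The contracted solution graph $\mathcal{S}^c(G,T)$ is the labeled graph $(H,\ell)$ whose nodes correspond bijectively to label components, distinct nodes $x,y$ being adjacent iff some solution in the component of $x$ is adjacent in $\mathcal{S}(G)$ to some solution in the component of $y$, and $\ell(x)$ the common label of the component of $x$; labeled graphs are identified up to label-preserving isomorphism. A certificate for $\mathcal{S}^c(G,T)=(H,\ell)$ is an assignment of a nonempty set $S_x$ of solutions of $G$ to every node $x\in V(H)$ such that: (a) $\{S_x\}$ partitions the set of solutions of $G$; (b) $p(G,T,\gamma)=\ell(x)$ for all $\gamma\in S_x$;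 (c) $\ell(x)\ne\ell(y)$ for every edge $xy$ of $H$; (d) each $S_x$ induces a connected subgraph of $\mathcal{S}(G)$; (e) distinct nodes $x,y$ are adjacent in $H$ iff there exist $\alpha\in S_x$, $\beta\in S_y$ adjacent in $\mathcal{S}(G)$. *)

theory Defs
  imports Main
begin

text \<open>A solution graph concept is modelled by a set of instances inst, a function sols
giving for each instance its set of solutions, and an adjacency relation adj G between
solutions of G.\<close>

definition solution_graph_concept ::
  "'g set \<Rightarrow> ('g \<Rightarrow> 's set) \<Rightarrow> ('g \<Rightarrow> 's \<Rightarrow> 's \<Rightarrow> bool) \<Rightarrow> bool" where
  "solution_graph_concept inst sols adj \<longleftrightarrow>
     (\<forall>G\<in>inst. \<forall>a b. adj G a b \<longrightarrow> adj G b a)"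

definition induced :: "('s \<Rightarrow> 's \<Rightarrow> bool) \<Rightarrow> 's set \<Rightarrow> 's \<Rightarrow> 's \<Rightarrow> bool" where
  "induced R C u v \<longleftrightarrow> u \<in> C \<and> v \<in> C \<and> R u v"

definition connected_in :: "('s \<Rightarrow> 's \<Rightarrow> bool) \<Rightarrow> 's set \<Rightarrow> bool" where
  "connected_in R C \<longleftrightarrow> (\<forall>a\<in>C. \<forall>b\<in>C. (induced R C)\<^sup>*\<^sup>* a b)"

definition same_label_connected ::
  "('g \<Rightarrow> 's set) \<Rightarrow> ('g \<Rightarrow> 's \<Rightarrow> 's \<Rightarrow> bool) \<Rightarrow> ('g \<Rightarrow> 't \<Rightarrow> 's \<Rightarrow> 'l)
   \<Rightarrow> 'g \<Rightarrow> 't \<Rightarrow> 's set \<Rightarrow> bool" where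
  "same_label_connected sols adj p G T C \<longleftrightarrow>
     C \<subseteq> sols G \<and> C \<noteq> {} \<and> (\<exists>l. \<forall>\<gamma>\<in>C. p G T \<gamma> = l) \<and> connected_in (adj G) C"

definition label_component ::
  "('g \<Rightarrow> 's set) \<Rightarrow> ('g \<Rightarrow> 's \<Rightarrow> 's \<Rightarrow> bool) \<Rightarrow> ('g \<Rightarrow> 't \<Rightarrow> 's \<Rightarrow> 'l)
   \<Rightarrow> 'g \<Rightarrow> 't \<Rightarrow> 's set \<Rightarrow> bool" where
  "label_component sols adj p G T C \<longleftrightarrow>
     same_label_connected sols adj p G T C \<and>
     (\<forall>D. same_label_connected sols adj p G T D \<and> C \<subseteq> D \<longrightarrow> D = C)"

definition labeled_graph :: "'n set \<Rightarrow> ('n \<Rightarrow> 'n \<Rightarrow> bool) \<Rightarrow> bool" where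
  "labeled_graph V E \<longleftrightarrow>
     (\<forall>x y. E x y \<longrightarrow> x \<in> V \<and> y \<in> V \<and> x \<noteq> y \<and> E y x)"

text \<open>(V,E,lab) is (up to label-preserving isomorphism) the contracted solution graph
S^c(G,T): f is a bijection from V onto the label components.\<close>
definition is_contracted_solution_graph ::
  "('g \<Rightarrow> 's set) \<Rightarrow> ('g \<Rightarrow> 's \<Rightarrow> 's \<Rightarrow> bool) \<Rightarrow> ('g \<Rightarrow> 't \<Rightarrow> 's \<Rightarrow> 'l)
   \<Rightarrow> 'g \<Rightarrow> 't \<Rightarrow> 'n set \<Rightarrow> ('n \<Rightarrow> 'n \<Rightarrow> bool) \<Rightarrow> ('n \<Rightarrow> 'l) \<Rightarrow> bool" where
  "is_contracted_solution_graph sols adj p G T V E lab \<longleftrightarrow>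
     labeled_graph V E \<and>
     (\<exists>f. bij_betw f V {C. label_component sols adj p G T C} \<and>
          (\<forall>x\<in>V. \<forall>y\<in>V. x \<noteq> y \<longrightarrow>
              (E x y \<longleftrightarrow> (\<exists>a\<in>f x. \<exists>b\<in>f y. adj G a b))) \<and>
          (\<forall>x\<in>V. \<forall>\<gamma>\<in>f x. lab x = p G T \<gamma>))"

definition certificate ::
  "('g \<Rightarrow> 's set) \<Rightarrow> ('g \<Rightarrow> 's \<Rightarrow> 's \<Rightarrow> bool) \<Rightarrow> ('g \<Rightarrow> 't \<Rightarrow> 's \<Rightarrow> 'l)
   \<Rightarrow> 'g \<Rightarrow> 't \<Rightarrow> 'n set \<Rightarrow> ('n \<Rightarrow> 'n \<Rightarrow> bool) \<Rightarrow> ('n \<Rightarrow> 'l) \<Rightarrow> ('n \<Rightarrow> 's set) \<Rightarrow> bool" where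
  "certificate sols adj p G T V E lab S \<longleftrightarrow>
     (\<forall>x\<in>V. S x \<noteq> {}) \<and>
     (\<forall>x\<in>V. S x \<subseteq> sols G) \<and>
     (\<Union>x\<in>V. S x) = sols G \<and>
     (\<forall>x\<in>V. \<forall>y\<in>V. x \<noteq> y \<longrightarrow> S x \<inter> S y = {}) \<and>
     (\<forall>x\<in>V. \<forall>\<gamma>\<in>S x. p G T \<gamma> = lab x) \<and>
     (\<forall>x\<in>V. \<forall>y\<in>V. E x y \<longrightarrow> lab x \<noteq> lab y) \<and>
     (\<forall>x\<in>V. connected_in (adj G) (S x)) \<and>
     (\<forall>x\<in>V. \<forall>y\<in>V. x \<noteq> y \<longrightarrow>
        (E x y \<longleftrightarrow> (\<exists>a\<in>S x. \<exists>b\<in>S y. adj G a b)))"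

end

theory Submission
  imports Defs
begin

text \<open>Only the certificate is needed: its blocks S z are connected, cover all solutions
disjointly, and two distinct blocks are adjacent in the contracted graph exactly when some of
their solutions are adjacent. A walk between solutions therefore projects to a walk between the
blocks containing them, and a walk between blocks lifts to one between any of their solutions
by connecting, inside each block, the endpoint of one crossing edge to the start of the next.\<close>

lemma induced_rtranclp_mono:
  assumes "C \<subseteq> D" and "(induced R C)\<^sup>*\<^sup>* a b"
  shows "(induced R D)\<^sup>*\<^sup>* a b"
proof -
  have "induced R C \<le> induced R D" using assms(1) by (auto simp: induced_def)
  then show ?thesis using assms(2) rtranclp_mono by blast
qed

lemma rtranclp_induced_blocks_project:
  assumes walk: "(induced R A)\<^sup>*\<^sup>* a b"
    and cover: "\<And>g. g \<in> A \<Longrightarrow> \<exists>z\<in>V. g \<in> S z"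
    and disjoint: "\<And>z w. z \<in> V \<Longrightarrow> w \<in> V \<Longrightarrow> z \<noteq> w \<Longrightarrow> S z \<inter> S w = {}"
    and crossing: "\<And>z w u v. z \<in> V \<Longrightarrow> w \<in> V \<Longrightarrow> z \<noteq> w \<Longrightarrow> u \<in> S z \<Longrightarrow> v \<in> S w \<Longrightarrow>
                     R u v \<Longrightarrow> E z w"
    and "x \<in> V" "a \<in> S x" "y \<in> V" "b \<in> S y"
  shows "(induced E V)\<^sup>*\<^sup>* x y"
proof -
  have unique: "z = w" if "z \<in> V" "w \<in> V" "g \<in> S z" "g \<in> S w" for z w g
    using disjoint that by blast
  from walk have "\<forall>z\<in>V. b \<in> S z \<longrightarrow> (induced E V)\<^sup>*\<^sup>* x z"
  proof (induction rule: rtranclp_induct)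
    case base
    then show ?case using unique \<open>x \<in> V\<close> \<open>a \<in> S x\<close> by blast
  next
    case (step u v)
    then have "u \<in> A" "v \<in> A" "R u v" by (auto simp: induced_def)
    then obtain z w where zw: "z \<in> V" "u \<in> S z" "w \<in> V" "v \<in> S w" using cover by blast
    have "(induced E V)\<^sup>*\<^sup>* x z" using step.IH zw by blast
    moreover have "(induced E V)\<^sup>=\<^sup>= z w"
      using crossing[OF zw(1,3) _ zw(2,4) \<open>R u v\<close>] zw by (auto simp: induced_def)
    ultimately have "(induced E V)\<^sup>*\<^sup>* x w" by (auto intro: rtranclp.rtrancl_into_rtrancl)
    then show ?case using unique zw by blast
  qed
  then show ?thesis using \<open>y \<in> V\<close> \<open>b \<in> S y\<close> by blast
qed

lemma rtranclp_induced_blocks_lift: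
  assumes walk: "(induced E V)\<^sup>*\<^sup>* x y"
    and blocks: "\<And>z. z \<in> V \<Longrightarrow> S z \<subseteq> A"
    and connected: "\<And>z. z \<in> V \<Longrightarrow> connected_in R (S z)"
    and crossing: "\<And>z w. z \<in> V \<Longrightarrow> w \<in> V \<Longrightarrow> E z w \<Longrightarrow> \<exists>u\<in>S z. \<exists>v\<in>S w. R u v"
    and "x \<in> V" "a \<in> S x" "b \<in> S y"
  shows "(induced R A)\<^sup>*\<^sup>* a b"
proof -
  have inside: "(induced R A)\<^sup>*\<^sup>* u v" if "z \<in> V" "u \<in> S z" "v \<in> S z" for z u v
    using connected[OF that(1)] that(2,3)
    by (auto simp: connected_in_def intro: induced_rtranclp_mono[OF blocks[OF that(1)]])
  from walk have "\<forall>g\<in>S y. (induced R A)\<^sup>*\<^sup>* a g"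
  proof (induction rule: rtranclp_induct)
    case base
    then show ?case using inside \<open>x \<in> V\<close> \<open>a \<in> S x\<close> by blast
  next
    case (step z w)
    then have "z \<in> V" "w \<in> V" "E z w" by (auto simp: induced_def)
    then obtain u v where uv: "u \<in> S z" "v \<in> S w" "R u v" using crossing by blast
    have "induced R A u v" using uv blocks \<open>z \<in> V\<close> \<open>w \<in> V\<close> by (auto simp: induced_def)
    then have "(induced R A)\<^sup>*\<^sup>* a v" using step.IH uv(1) by (auto intro: rtranclp.rtrancl_into_rtrancl)
    then show ?case using inside[OF \<open>w \<in> V\<close> uv(2)] by (blast intro: rtranclp_trans)
  qed
  then show ?thesis using \<open>b \<in> S y\<close> by blast
qed

theorem proposition1:
  fixes inst :: "'g set" and sols :: "'g \<Rightarrow> 's set" and adj :: "'g \<Rightarrow> 's \<Rightarrow> 's \<Rightarrow> bool"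
    and p :: "'g \<Rightarrow> 't \<Rightarrow> 's \<Rightarrow> 'l" and G :: 'g and T :: 't
    and V :: "'n set" and E :: "'n \<Rightarrow> 'n \<Rightarrow> bool" and lab :: "'n \<Rightarrow> 'l"
    and S :: "'n \<Rightarrow> 's set" and \<alpha> \<beta> :: 's and x y :: 'n
  assumes "solution_graph_concept inst sols adj"
    and "G \<in> inst"
    and "is_contracted_solution_graph sols adj p G T V E lab"
    and "certificate sols adj p G T V E lab S"
    and "\<alpha> \<in> sols G" and "\<beta> \<in> sols G"
    and "x \<in> V" and "\<alpha> \<in> S x" and "y \<in> V" and "\<beta> \<in> S y"
  shows "(induced (adj G) (sols G))\<^sup>*\<^sup>* \<alpha> \<beta> \<longleftrightarrow> (induced E V)\<^sup>*\<^sup>* x y"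
proof -
  have irrefl: "z \<noteq> w" if "E z w" for z w
    using assms(3) that by (auto simp: is_contracted_solution_graph_def labeled_graph_def)
  note cert = assms(4)[unfolded certificate_def]
  show ?thesis
  proof
    assume "(induced (adj G) (sols G))\<^sup>*\<^sup>* \<alpha> \<beta>"
    then show "(induced E V)\<^sup>*\<^sup>* x y"
      by (rule rtranclp_induced_blocks_project[where S = S]) (use cert assms(7-10) in blast)+
  next
    assume "(induced E V)\<^sup>*\<^sup>* x y"
    then show "(induced (adj G) (sols G))\<^sup>*\<^sup>* \<alpha> \<beta>"
      by (rule rtranclp_induced_blocks_lift[where S = S]) (use cert irrefl assms(7,8,10) in blast)+
  qed
qed

end
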